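(* Let $(\Omega,\mathcal{F},\mathbb{P})$ be an atomless probability space, $Z_t$ an $\mathbb{R}^D$-valued random vector, and $V_t,U_t$ real-valued functions on a set $S\subseteq\mathbb{R}^D$ containing the range of $Z_t$, such that $X_t=V_t(Z_t)^+$ and $Y_t=U_t(Z_t)^+$ are random variables. Let $z_t^1,\dots,z_t^n\in S$ and $\mathbf{y}_t=(U_t(z_t^i)^+)_{i=1}^n$. Then for any exposure measure $\rho$, \[ \left|\rho(X_t)-\widehat{\rho}(\mathbf{y}_t)\right|\le \Vert V_t-U_t\Vert_\infty+\left|\rho(Y_t)-\widehat{\rho}(\mathbf{y}_t)\right|. \]
   Context: $x^+=\max\{x,0\}$. An exposure measure is a map $\rho:L^0(\Omega,\mathcal{F},\mathbb{P})\to\mathbb{R}\cup\{\infty\}$ that is monotone ($X_1\le X_2\Rightarrow\rho(X_1)\le\rho(X_2)$) and cash-additive ($\rho(X+c)=\rho(X)+c$ for $c\in\mathbb{R}$). For a finite sample $\mathbf{y}=(y^i)_{i=1}^n$, $F_{\mathbf{y}}(x)=\frac1n\sum_{i=1}^n\mathbb{1}_{\{x\ge y^i\}}$ is the empirical distribution and $\widehat\rho(\mathbf{y})=\rho(F_{\mathbf{y}})$ is the empirical estimator, i.e. $\rho$ evaluated at a random variable with distribution $F_{\mathbf{y}}$. $\Vert V_t-U_t\Vert_\infty=\sup_{s\in S}|V_t(s)-U_t(s)|$ (genuine supremum, possibly $+\infty$, in which case the claim is trivial). *)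

theory Defs
  imports "HOL-Probability.Probability"
begin

definition atomless :: "'a measure \<Rightarrow> bool" where
  "atomless M \<longleftrightarrow> (\<forall>A\<in>sets M. measure M A > 0 \<longrightarrow>
      (\<exists>B\<in>sets M. B \<subseteq> A \<and> 0 < measure M B \<and> measure M B < measure M A))"

definition exposure_measure :: "'a measure \<Rightarrow> (('a \<Rightarrow> real) \<Rightarrow> ereal) \<Rightarrow> bool" where
  "exposure_measure M \<rho> \<longleftrightarrow>
     (\<forall>X\<in>borel_measurable M. \<rho> X \<noteq> -\<infinity>) \<and>
     (\<forall>X\<in>borel_measurable M. \<forall>Y\<in>borel_measurable M.
        (AE \<omega> in M. X \<omega> \<le> Y \<omega>) \<longrightarrow> \<rho> X \<le> \<rho> Y) \<and>
     (\<forall>X\<in>borel_measurable M. \<forall>c::real. \<rho> (\<lambda>\<omega>. X \<omega> + c) = \<rho> X + ereal c)"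

definition empirical_cdf :: "(nat \<Rightarrow> real) \<Rightarrow> nat \<Rightarrow> real \<Rightarrow> real" where
  "empirical_cdf y n x = (\<Sum>i<n. if x \<ge> y i then 1 else 0) / real n"

definition sup_dist :: "'b set \<Rightarrow> ('b \<Rightarrow> real) \<Rightarrow> ('b \<Rightarrow> real) \<Rightarrow> ereal" where
  "sup_dist S V U = (SUP s\<in>S. ereal \<bar>V s - U s\<bar>)"

end

theory Submission
  imports Defs
begin

text \<open>Monotonicity and cash-additivity make an exposure measure 1-Lipschitz for the
  uniform distance: \<open>X \<le> Y + c\<close> gives \<open>\<rho> X \<le> \<rho> Y + c\<close>. Since \<open>x \<mapsto> x\<^sup>+\<close> is 1-Lipschitz,
  \<open>X\<^sub>t\<close> and \<open>Y\<^sub>t\<close> differ uniformly by at most \<open>\<parallel>V\<^sub>t - U\<^sub>t\<parallel>\<^sub>\<infinity>\<close>, and the claim is the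
  triangle inequality through \<open>\<rho> Y\<^sub>t\<close>.\<close>

lemma exposure_measure_mono:
  "exposure_measure M \<rho> \<Longrightarrow> X \<in> borel_measurable M \<Longrightarrow> Y \<in> borel_measurable M \<Longrightarrow>
    (AE \<omega> in M. X \<omega> \<le> Y \<omega>) \<Longrightarrow> \<rho> X \<le> \<rho> Y"
  unfolding exposure_measure_def by blast

lemma exposure_measure_add_const:
  "exposure_measure M \<rho> \<Longrightarrow> X \<in> borel_measurable M \<Longrightarrow> \<rho> (\<lambda>\<omega>. X \<omega> + c) = \<rho> X + ereal c"
  unfolding exposure_measure_def by blast

lemma exposure_measure_le_add_const:
  assumes "exposure_measure M \<rho>"
    and "X \<in> borel_measurable M" and "Y \<in> borel_measurable M"
    and "AE \<omega> in M. X \<omega> \<le> Y \<omega> + c"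
  shows "\<rho> X \<le> \<rho> Y + ereal c"
proof -
  have "(\<lambda>\<omega>. Y \<omega> + c) \<in> borel_measurable M"
    using assms(3) by simp
  with assms(1,2) have "\<rho> X \<le> \<rho> (\<lambda>\<omega>. Y \<omega> + c)"
    using assms(4) by (rule exposure_measure_mono)
  also have "\<dots> = \<rho> Y + ereal c"
    using assms(1,3) by (rule exposure_measure_add_const)
  finally show ?thesis .
qed

lemma ereal_abs_diff_le_add:
  fixes a b w :: ereal
  assumes "a \<le> b + ereal c" and "b \<le> a + ereal c"
  shows "\<bar>a - w\<bar> \<le> ereal c + \<bar>b - w\<bar>"
  using assms by (cases a; cases b; cases w) simp_all

lemma exposure_measure_abs_diff_le:
  assumes "exposure_measure M \<rho>"
    and "X \<in> borel_measurable M" and "Y \<in> borel_measurable M"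
    and "AE \<omega> in M. \<bar>X \<omega> - Y \<omega>\<bar> \<le> c"
  shows "\<bar>\<rho> X - \<rho> W\<bar> \<le> ereal c + \<bar>\<rho> Y - \<rho> W\<bar>"
proof (rule ereal_abs_diff_le_add)
  have "AE \<omega> in M. X \<omega> \<le> Y \<omega> + c"
    using assms(4) by eventually_elim simp
  with assms(1-3) show "\<rho> X \<le> \<rho> Y + ereal c"
    by (rule exposure_measure_le_add_const)
  have "AE \<omega> in M. Y \<omega> \<le> X \<omega> + c"
    using assms(4) by eventually_elim simp
  with assms(1,3,2) show "\<rho> Y \<le> \<rho> X + ereal c"
    by (rule exposure_measure_le_add_const)
qed

lemma sup_dist_upper: "s \<in> S \<Longrightarrow> ereal \<bar>V s - U s\<bar> \<le> sup_dist S V U"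
  unfolding sup_dist_def by (rule SUP_upper)

lemma abs_diff_max_0_le: "\<bar>max (a::real) 0 - max b 0\<bar> \<le> \<bar>a - b\<bar>"
  by linarith

theorem proposition1p2:
  fixes M :: "'a measure" and Z :: "'a \<Rightarrow> real^'d" and S :: "(real^'d) set"
    and V U :: "real^'d \<Rightarrow> real" and z :: "nat \<Rightarrow> real^'d" and n :: nat
    and \<rho> :: "('a \<Rightarrow> real) \<Rightarrow> ereal" and W :: "'a \<Rightarrow> real"
  assumes "prob_space M" and "atomless M"
    and "Z \<in> borel_measurable M" and "Z ` space M \<subseteq> S"
    and "(\<lambda>\<omega>. max (V (Z \<omega>)) 0) \<in> borel_measurable M"
    and "(\<lambda>\<omega>. max (U (Z \<omega>)) 0) \<in> borel_measurable M"
    and "n \<ge> 1" and "\<forall>i<n. z i \<in> S"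
    and "exposure_measure M \<rho>"
    and "W \<in> borel_measurable M"
    and "\<forall>x. measure M {\<omega>\<in>space M. W \<omega> \<le> x} = empirical_cdf (\<lambda>i. max (U (z i)) 0) n x"
  shows "\<bar>\<rho> (\<lambda>\<omega>. max (V (Z \<omega>)) 0) - \<rho> W\<bar>
           \<le> sup_dist S V U + \<bar>\<rho> (\<lambda>\<omega>. max (U (Z \<omega>)) 0) - \<rho> W\<bar>"
proof (cases "sup_dist S V U = \<infinity>")
  case False
  have "z 0 \<in> S"
    using assms(7,8) by simp
  then have "sup_dist S V U \<noteq> -\<infinity>"
    using sup_dist_upper[of "z 0" S V U] by auto
  with False obtain c where c: "sup_dist S V U = ereal c"
    by (cases "sup_dist S V U") auto
  have "\<bar>max (V (Z \<omega>)) 0 - max (U (Z \<omega>)) 0\<bar> \<le> c" if "\<omega> \<in> space M" for \<omega>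
  proof -
    have "ereal \<bar>V (Z \<omega>) - U (Z \<omega>)\<bar> \<le> ereal c"
      using sup_dist_upper[of "Z \<omega>" S V U] assms(4) that c by auto
    then show ?thesis
      using abs_diff_max_0_le[of "V (Z \<omega>)" "U (Z \<omega>)"] by simp
  qed
  then have "AE \<omega> in M. \<bar>max (V (Z \<omega>)) 0 - max (U (Z \<omega>)) 0\<bar> \<le> c"
    by (rule AE_I2)
  with assms(9,5,6) show ?thesis
    unfolding c by (rule exposure_measure_abs_diff_le)
qed simp

end
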